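(* Under the standing assumptions below, $n^{-3/4}X_n^{(1)}\to0$ in probability as $n\to\infty$, where $$X_n^{(1)}=\sum_{y\in\mathbb Z}\epsilon_y\sum_{i=1}^{\eta_{n-1}(y)}\big(\xi_i^{(y)}-m\big).$$
   Context: Standing assumptions: $(\epsilon_y)_{y\in\mathbb Z}$ is a stationary sequence of $\{-1,+1\}$-valued associated random variables with $\mathbb P[\epsilon_0=\pm1]=\tfrac12$ and $\mathbb E[\epsilon_0\epsilon_y]=O(|y|^{-\alpha})$ for some $\alpha>1$. $Y$ is a simple symmetric random walk on $\mathbb Z$ with $Y_0=0$, independent of $\epsilon$. $(\xi_i^{(y)})_{i\ge1,y\in\mathbb Z}$ are i.i.d., independent of $(\epsilon,Y)$, with $\mathbb P[\xi_i^{(y)}=k]=\tfrac23(\tfrac13)^k$, $k\ge0$, mean $m=\tfrac12$. Local time: $\eta_n(y)=\sum_{k=0}^n\mathbf 1_{\{Y_k=y\}}$, $\eta_{-1}\equiv0$; empty sums are $0$. *)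

theory Defs
  imports "HOL-Probability.Probability"
begin

definition stationary_seq :: "'a measure \<Rightarrow> (int \<Rightarrow> 'a \<Rightarrow> int) \<Rightarrow> bool" where
  "stationary_seq M eps \<longleftrightarrow>
     (\<forall>k::int. distr M (PiM UNIV (\<lambda>_. count_space UNIV)) (\<lambda>\<omega> y. eps (y + k) \<omega>)
             = distr M (PiM UNIV (\<lambda>_. count_space UNIV)) (\<lambda>\<omega> y. eps y \<omega>))"

text \<open>Association (Esary--Proschan--Walkup): for every finite index set I and all
  coordinatewise nondecreasing f, g of (eps_y)_{y in I}, Cov(f, g) >= 0.  The vector
  (eps_y)_{y in I} is encoded as the function that is eps_y on I and 0 off I.\<close>
definition associated_seq :: "'a measure \<Rightarrow> (int \<Rightarrow> 'a \<Rightarrow> int) \<Rightarrow> bool" where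
  "associated_seq M eps \<longleftrightarrow>
     (\<forall>I::int set. \<forall>f g :: (int \<Rightarrow> real) \<Rightarrow> real. finite I \<longrightarrow>
        (\<forall>x z. (\<forall>i\<in>I. x i \<le> z i) \<longrightarrow> f x \<le> f z) \<longrightarrow>
        (\<forall>x z. (\<forall>i\<in>I. x i \<le> z i) \<longrightarrow> g x \<le> g z) \<longrightarrow>
        (let V = (\<lambda>\<omega> i. if i \<in> I then real_of_int (eps i \<omega>) else 0) in
          (\<integral>\<omega>. f (V \<omega>) * g (V \<omega>) \<partial>M)
            - (\<integral>\<omega>. f (V \<omega>) \<partial>M) * (\<integral>\<omega>. g (V \<omega>) \<partial>M) \<ge> 0))"

text \<open>Local time before time n: eta_{n-1}(y) = #{k \<le> n-1 : Y_k = y}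
  (equal to 0 for n = 0, matching eta_{-1} = 0).\<close>
definition loc_time_before :: "(nat \<Rightarrow> 'a \<Rightarrow> int) \<Rightarrow> nat \<Rightarrow> int \<Rightarrow> 'a \<Rightarrow> nat" where
  "loc_time_before Y n y \<omega> = card {k. k < n \<and> Y k \<omega> = y}"

text \<open>Only sites
  y visited before time n contribute (other summands are empty sums), so the sum is taken over
  that finite set of sites.\<close>
definition X1 :: "(int \<Rightarrow> 'a \<Rightarrow> int) \<Rightarrow> (nat \<Rightarrow> 'a \<Rightarrow> int) \<Rightarrow> (nat \<Rightarrow> int \<Rightarrow> 'a \<Rightarrow> nat)
                  \<Rightarrow> real \<Rightarrow> nat \<Rightarrow> 'a \<Rightarrow> real" where
  "X1 eps Y xi m n \<omega> =
     (\<Sum>y\<in>(\<lambda>k. Y k \<omega>) ` {..<n}.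
        real_of_int (eps y \<omega>) * (\<Sum>i=1..loc_time_before Y n y \<omega>. (real (xi i y \<omega>) - m)))"

end

(*
  Write X_n^(1) as the sum over the box of pairs (y, i), |y| <= n, 1 <= i <= n, of the
  weight eps_y * [i <= eta_(n-1)(y)], a function of (eps, Y), times the centred geometric
  variable xi_i^(y) - 1/2.  The xi are independent of each other and of (eps, Y), so all cross
  terms vanish in the second moment, and since eps_y^2 = 1 and the local times add up to n,
  E[(X_n^(1))^2] = Var(xi) * n.  Chebyshev's inequality then bounds
  P(|n^(-3/4) X_n^(1)| > e) by Var(xi) n^(-1/2) / e^2.
*)

theory Submission
  imports Defs
begin

text \<open>The coefficients (n+1)(n+2) are those of the twice differentiated geometric series, and
  termwise differentiation preserves the radius of convergence.\<close>

lemma summable_Suc_Suc_times_geometric: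
  fixes x :: real
  assumes "\<bar>x\<bar> < 1"
  shows "summable (\<lambda>n. real (Suc n) * real (Suc (Suc n)) * x ^ n)"
proof -
  have diffs_one: "diffs (\<lambda>_. 1 :: real) = (\<lambda>n. real (Suc n))"
    by (simp add: diffs_def fun_eq_iff)
  have diffs_Suc: "diffs (\<lambda>n. real (Suc n)) = (\<lambda>n. real (Suc n) * real (Suc (Suc n)))"
    by (simp add: diffs_def fun_eq_iff)
  have "summable (\<lambda>n. diffs (\<lambda>_. 1) n * x ^ n)" if "norm x < 1" for x :: real
    using that by (intro termdiff_converges[where K = 1]) (simp_all add: summable_geometric)
  then have "summable (\<lambda>n. diffs (\<lambda>n. real (Suc n)) n * x ^ n)"
    using assms by (intro termdiff_converges[where K = 1]) (simp_all add: diffs_one)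
  then show ?thesis unfolding diffs_Suc .
qed

lemma integrable_geometric_pmf_power2:
  assumes "p \<in> {0<..1}"
  shows "integrable (geometric_pmf p) (\<lambda>k. real k ^ 2)"
proof -
  have "summable (\<lambda>k. p * (real (Suc k) * real (Suc (Suc k)) * (1 - p) ^ k))"
    using assms by (intro summable_mult summable_Suc_Suc_times_geometric) auto
  then have "summable (\<lambda>k. (1 - p) ^ k * p * real k ^ 2)"
  proof (rule summable_comparison_test'[where N = 0])
    fix k :: nat
    have "real k ^ 2 \<le> real (Suc k) * real (Suc (Suc k))"
      by (simp add: power2_eq_square mult_mono)
    then have "p * (1 - p) ^ k * real k ^ 2 \<le> p * (1 - p) ^ k * (real (Suc k) * real (Suc (Suc k)))"
      using assms by (intro mult_left_mono) auto
    then show "norm ((1 - p) ^ k * p * real k ^ 2)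
        \<le> p * (real (Suc k) * real (Suc (Suc k)) * (1 - p) ^ k)"
      using assms by (simp add: mult_ac)
  qed
  then show ?thesis
    unfolding measure_pmf_eq_density using assms
    by (subst integrable_density) (auto simp: integrable_count_space_nat_iff)
qed

lemma (in prob_space) distr_eq_geometric_pmf:
  assumes p: "p \<in> {0<..1}" and X: "X \<in> measurable M (count_space UNIV)"
    and law: "\<And>k. prob {\<omega> \<in> space M. X \<omega> = k} = (1 - p) ^ k * p"
  shows "distr M (count_space UNIV) X = measure_pmf (geometric_pmf p)"
proof (rule measure_eqI_countable[where A = UNIV])
  fix k :: nat
  have "X -` {k} \<inter> space M = {\<omega> \<in> space M. X \<omega> = k}" by auto
  then show "emeasure (distr M (count_space UNIV) X) {k} = emeasure (geometric_pmf p) {k}"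
    using X p law[of k] by (simp add: emeasure_distr emeasure_eq_measure emeasure_pmf_single)
qed auto

lemma (in prob_space) geometric_centered_moments:
  assumes p: "p \<in> {0<..1}" and X: "X \<in> measurable M (count_space UNIV)"
    and law: "\<And>k. prob {\<omega> \<in> space M. X \<omega> = k} = (1 - p) ^ k * p"
  shows "integrable M (\<lambda>\<omega>. real (X \<omega>) - (1 - p) / p)"
    and "expectation (\<lambda>\<omega>. real (X \<omega>) - (1 - p) / p) = 0"
    and "integrable M (\<lambda>\<omega>. (real (X \<omega>) - (1 - p) / p) ^ 2)"
    and "expectation (\<lambda>\<omega>. (real (X \<omega>) - (1 - p) / p) ^ 2)
           = measure_pmf.variance (geometric_pmf p) real"
proof -
  note distr = distr_eq_geometric_pmf[OF p X law, symmetric]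
  have mean: "measure_pmf.expectation (geometric_pmf p) real = (1 - p) / p"
    using expectation_geometric_pmf[OF p] .
  have int1: "integrable (geometric_pmf p) (\<lambda>k. real k - (1 - p) / p)"
    using integrable_real_geometric_pmf[OF p] by simp
  have int2: "integrable (geometric_pmf p) (\<lambda>k. (real k - (1 - p) / p) ^ 2)"
    unfolding power2_diff
    using integrable_geometric_pmf_power2[OF p] integrable_real_geometric_pmf[OF p]
    by (intro Bochner_Integration.integrable_diff Bochner_Integration.integrable_add
        integrable_mult_left integrable_mult_right) (auto simp: measure_pmf.integrable_const)
  show "integrable M (\<lambda>\<omega>. real (X \<omega>) - (1 - p) / p)"
    using int1 unfolding distr by (simp add: integrable_distr_eq[OF X])
  show "integrable M (\<lambda>\<omega>. (real (X \<omega>) - (1 - p) / p) ^ 2)"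
    using int2 unfolding distr by (simp add: integrable_distr_eq[OF X])
  have "expectation (\<lambda>\<omega>. real (X \<omega>) - (1 - p) / p)
      = measure_pmf.expectation (geometric_pmf p) (\<lambda>k. real k - (1 - p) / p)"
    unfolding distr by (simp add: integral_distr[OF X])
  also have "\<dots> = 0"
    using integrable_real_geometric_pmf[OF p] mean by (simp add: measure_pmf.prob_space)
  finally show "expectation (\<lambda>\<omega>. real (X \<omega>) - (1 - p) / p) = 0" .
  have "expectation (\<lambda>\<omega>. (real (X \<omega>) - (1 - p) / p) ^ 2)
      = measure_pmf.expectation (geometric_pmf p) (\<lambda>k. (real k - (1 - p) / p) ^ 2)"
    unfolding distr by (simp add: integral_distr[OF X])
  then show "expectation (\<lambda>\<omega>. (real (X \<omega>) - (1 - p) / p) ^ 2)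
      = measure_pmf.variance (geometric_pmf p) real"
    by (simp only: mean)
qed

lemma (in prob_space) indep_vars_imp_indep_var:
  assumes indep: "indep_vars M' X I" and "i \<in> I" "j \<in> I" "i \<noteq> j"
  shows "indep_var (M' i) (X i) (M' j) (X j)"
proof -
  have "indep_var (M' i) ((\<lambda>f. f i) \<circ> (\<lambda>\<omega>. restrict (\<lambda>k. X k \<omega>) {i}))
                  (M' j) ((\<lambda>f. f j) \<circ> (\<lambda>\<omega>. restrict (\<lambda>k. X k \<omega>) {j}))"
    using assms by (intro indep_var_compose[OF indep_var_restrict[OF indep]]) auto
  then show ?thesis by (simp add: comp_def)
qed

lemma (in prob_space) indep_set_imp_indep_var:
  assumes indep: "indep_set (sets N1) (sets N2)"
    and space: "space N1 = space M" "space N2 = space M"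
    and X: "X \<in> measurable N1 S" and Y: "Y \<in> measurable N2 T"
  shows "indep_var S X T Y"
proof -
  have events: "sets N1 \<subseteq> events" "sets N2 \<subseteq> events"
    using indep by (auto simp: indep_sets2_eq)
  have rv: "random_variable S X" "random_variable T Y"
    using measurable_mono[of S S N1 M] measurable_mono[of T T N2 M] events space X Y by auto
  have "X -` A \<inter> space M \<in> sets N1" if "A \<in> sets S" for A
    using measurable_sets[OF X that] space by simp
  moreover have "Y -` A \<inter> space M \<in> sets N2" if "A \<in> sets T" for A
    using measurable_sets[OF Y that] space by simp
  ultimately have "indep_set {X -` A \<inter> space M | A. A \<in> sets S} {Y -` A \<inter> space M | A. A \<in> sets T}"
    using indep unfolding indep_set_def
    by (rule_tac indep_sets_mono_sets) (auto split: bool.split)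
  then have "indep_sets (\<lambda>b. {case_bool X Y b -` A \<inter> space M | A. A \<in> sets (case_bool S T b)}) UNIV"
    unfolding indep_set_def by (rule indep_sets_mono_sets) (auto split: bool.split)
  then show ?thesis
    unfolding indep_var_def indep_vars_def2 using rv by (auto split: bool.split)
qed

lemma measurable_vimage_algebra_PiM_component:
  assumes "f \<in> X \<rightarrow> space (PiM I N)" "i \<in> I"
  shows "(\<lambda>x. f x i) \<in> measurable (vimage_algebra X f (PiM I N)) (N i)"
  using measurable_vimage_algebra1[OF assms(1)] measurable_component_singleton[OF assms(2)]
  by (rule measurable_compose)

lemma (in prob_space) second_moment_sum_indep_weights:
  fixes A D :: "'i \<Rightarrow> 'a \<Rightarrow> real"
  assumes P: "finite P"
    and indep: "indep_set (sets N1) (sets N2)"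
    and space: "space N1 = space M" "space N2 = space M"
    and A: "\<And>p. p \<in> P \<Longrightarrow> A p \<in> borel_measurable N1"
    and D: "\<And>p. p \<in> P \<Longrightarrow> D p \<in> borel_measurable N2"
    and AA: "\<And>p q. p \<in> P \<Longrightarrow> q \<in> P \<Longrightarrow> integrable M (\<lambda>\<omega>. A p \<omega> * A q \<omega>)"
    and DD: "\<And>p q. p \<in> P \<Longrightarrow> q \<in> P \<Longrightarrow> integrable M (\<lambda>\<omega>. D p \<omega> * D q \<omega>)"
    and orth: "\<And>p q. p \<in> P \<Longrightarrow> q \<in> P \<Longrightarrow> p \<noteq> q \<Longrightarrow> expectation (\<lambda>\<omega>. D p \<omega> * D q \<omega>) = 0"
  shows "integrable M (\<lambda>\<omega>. (\<Sum>p\<in>P. A p \<omega> * D p \<omega>)\<^sup>2)"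
    and "expectation (\<lambda>\<omega>. (\<Sum>p\<in>P. A p \<omega> * D p \<omega>)\<^sup>2)
           = (\<Sum>p\<in>P. expectation (\<lambda>\<omega>. (A p \<omega>)\<^sup>2) * expectation (\<lambda>\<omega>. (D p \<omega>)\<^sup>2))"
proof -
  define K where "K p q \<omega> = (A p \<omega> * A q \<omega>) * (D p \<omega> * D q \<omega>)" for p q \<omega>
  have square: "(\<Sum>p\<in>P. A p \<omega> * D p \<omega>)\<^sup>2 = (\<Sum>p\<in>P. \<Sum>q\<in>P. K p q \<omega>)" for \<omega>
    unfolding K_def power2_eq_square sum_product by (simp add: mult_ac)
  have indep_pq: "indep_var borel (\<lambda>\<omega>. A p \<omega> * A q \<omega>) borel (\<lambda>\<omega>. D p \<omega> * D q \<omega>)"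
    if "p \<in> P" "q \<in> P" for p q
    using A[OF that(1)] A[OF that(2)] D[OF that(1)] D[OF that(2)]
    by (intro indep_set_imp_indep_var[OF indep space] borel_measurable_times)
  have K: "integrable M (K p q)"
    "expectation (K p q) = expectation (\<lambda>\<omega>. A p \<omega> * A q \<omega>) * expectation (\<lambda>\<omega>. D p \<omega> * D q \<omega>)"
    if "p \<in> P" "q \<in> P" for p q
    using indep_var_integrable[OF indep_pq] indep_var_lebesgue_integral[OF indep_pq] AA DD that
    unfolding K_def by auto
  show "integrable M (\<lambda>\<omega>. (\<Sum>p\<in>P. A p \<omega> * D p \<omega>)\<^sup>2)"
    unfolding square using K(1) by auto
  have "expectation (\<lambda>\<omega>. (\<Sum>p\<in>P. A p \<omega> * D p \<omega>)\<^sup>2) = (\<Sum>p\<in>P. \<Sum>q\<in>P. expectation (K p q))"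
    unfolding square using K(1) by (simp add: Bochner_Integration.integral_sum)
  also have "\<dots> = (\<Sum>p\<in>P. \<Sum>q\<in>P. if q = p then expectation (K p p) else 0)"
    using K orth by (intro sum.cong refl) auto
  also have "\<dots> = (\<Sum>p\<in>P. expectation (\<lambda>\<omega>. (A p \<omega>)\<^sup>2) * expectation (\<lambda>\<omega>. (D p \<omega>)\<^sup>2))"
    using P K by (simp add: power2_eq_square)
  finally show "expectation (\<lambda>\<omega>. (\<Sum>p\<in>P. A p \<omega> * D p \<omega>)\<^sup>2)
      = (\<Sum>p\<in>P. expectation (\<lambda>\<omega>. (A p \<omega>)\<^sup>2) * expectation (\<lambda>\<omega>. (D p \<omega>)\<^sup>2))" .
qed

lemma (in prob_space) second_moment_linear_imp_tendsto_prob: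
  fixes S :: "nat \<Rightarrow> 'a \<Rightarrow> real"
  assumes meas: "\<And>n. S n \<in> borel_measurable M"
    and int: "\<And>n. integrable M (\<lambda>\<omega>. (S n \<omega>)\<^sup>2)"
    and moment: "\<And>n. expectation (\<lambda>\<omega>. (S n \<omega>)\<^sup>2) \<le> C * real n"
    and a: "a > 1/2" and e: "e > 0"
  shows "(\<lambda>n. prob {\<omega> \<in> space M. \<bar>real n powr (-a) * S n \<omega>\<bar> > e}) \<longlonglongrightarrow> 0"
proof (rule tendsto_sandwich[OF _ _ tendsto_const])
  show "(\<lambda>n. C / e\<^sup>2 * real n powr (1 - 2 * a)) \<longlonglongrightarrow> 0"
    using a by (intro tendsto_mult_right_zero tendsto_neg_powr filterlim_real_sequentially) auto
  show "\<forall>\<^sub>F n in sequentially. prob {\<omega> \<in> space M. \<bar>real n powr (-a) * S n \<omega>\<bar> > e}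
      \<le> C / e\<^sup>2 * real n powr (1 - 2 * a)"
    using eventually_gt_at_top[of 0]
  proof eventually_elim
    case (elim n)
    define c where "c = (e * real n powr a)\<^sup>2"
    have c: "c > 0" using e elim by (simp add: c_def)
    have "(S n \<omega>)\<^sup>2 \<ge> c" if "\<bar>real n powr (-a) * S n \<omega>\<bar> > e" for \<omega>
    proof -
      have "e * real n powr a < \<bar>S n \<omega>\<bar>"
        using that elim by (simp add: abs_mult powr_minus field_simps)
      then have "(e * real n powr a)\<^sup>2 \<le> \<bar>S n \<omega>\<bar>\<^sup>2"
        using e by (intro power_mono) auto
      then show ?thesis by (simp add: c_def)
    qed
    then have "prob {\<omega> \<in> space M. \<bar>real n powr (-a) * S n \<omega>\<bar> > e} \<le> prob {\<omega> \<in> space M. (S n \<omega>)\<^sup>2 \<ge> c}"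
      using meas by (intro finite_measure_mono) auto
    also have "\<dots> \<le> expectation (\<lambda>\<omega>. (S n \<omega>)\<^sup>2) / c"
      by (rule integral_Markov_inequality_measure[OF int _ _ c]) auto
    also have "\<dots> \<le> C * real n / c"
      using moment c by (intro divide_right_mono) auto
    also have "\<dots> = C / e\<^sup>2 * real n powr (1 - 2 * a)"
    proof -
      have "(real n powr a)\<^sup>2 = real n powr (2 * a)"
        by (simp add: power2_eq_square powr_add[symmetric])
      then show ?thesis
        using elim e by (simp add: c_def power_mult_distrib powr_diff field_simps)
    qed
    finally show ?case .
  qed
qed simp

lemma loc_time_before_eq_sum: "loc_time_before Y n y \<omega> = (\<Sum>k<n. of_bool (Y k \<omega> = y))"
proof -
  have "{k. k < n \<and> Y k \<omega> = y} = {..<n} \<inter> {k. Y k \<omega> = y}" by auto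
  then show ?thesis unfolding loc_time_before_def by simp
qed

lemma loc_time_before_le: "loc_time_before Y n y \<omega> \<le> n"
  unfolding loc_time_before_def by (rule order.trans[OF card_mono[of "{..<n}"]]) auto

lemma sum_loc_time_before:
  assumes "finite S" "(\<lambda>k. Y k \<omega>) ` {..<n} \<subseteq> S"
  shows "(\<Sum>y\<in>S. loc_time_before Y n y \<omega>) = n"
proof -
  have "(\<Sum>y\<in>S. loc_time_before Y n y \<omega>) = (\<Sum>k<n. \<Sum>y\<in>S. of_bool (Y k \<omega> = y))"
    unfolding loc_time_before_eq_sum by (rule sum.swap)
  also have "\<dots> = (\<Sum>k<n. 1)"
    using assms by (intro sum.cong refl) (auto simp: sum.delta)
  finally show ?thesis by simp
qed

lemma X1_eq_sum_box:
  assumes "finite S" "(\<lambda>k. Y k \<omega>) ` {..<n} \<subseteq> S"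
  shows "X1 eps Y xi m n \<omega> = (\<Sum>(y, i)\<in>S \<times> {1..n}.
           (real_of_int (eps y \<omega>) * of_bool (i \<le> loc_time_before Y n y \<omega>)) * (real (xi i y \<omega>) - m))"
proof -
  define \<eta> where "\<eta> y = loc_time_before Y n y \<omega>" for y
  define f where "f y i = real (xi i y \<omega>) - m" for y i
  have unvisited: "\<eta> y = 0" if "y \<notin> (\<lambda>k. Y k \<omega>) ` {..<n}" for y
    using that unfolding \<eta>_def loc_time_before_def by auto
  have truncate: "(\<Sum>i=1..\<eta> y. f y i) = (\<Sum>i=1..n. of_bool (i \<le> \<eta> y) * f y i)" for y
  proof -
    have "{1..n} \<inter> {i. i \<le> \<eta> y} = {1..\<eta> y}"
      using loc_time_before_le[of Y n y \<omega>] unfolding \<eta>_def by auto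
    then show ?thesis by simp
  qed
  have "X1 eps Y xi m n \<omega> = (\<Sum>y\<in>S. real_of_int (eps y \<omega>) * (\<Sum>i=1..\<eta> y. f y i))"
    unfolding X1_def \<eta>_def[symmetric] f_def[symmetric]
    using assms unvisited by (intro sum.mono_neutral_left) auto
  also have "\<dots> = (\<Sum>y\<in>S. \<Sum>i=1..n. (real_of_int (eps y \<omega>) * of_bool (i \<le> \<eta> y)) * f y i)"
    unfolding truncate by (simp only: sum_distrib_left mult.assoc)
  finally show ?thesis
    unfolding \<eta>_def f_def by (simp add: sum.cartesian_product)
qed

definition xi_variance :: real where
  "xi_variance = measure_pmf.variance (geometric_pmf (2/3)) real"

locale X1_model = prob_space M for M :: "'a measure" +
  fixes eps :: "int \<Rightarrow> 'a \<Rightarrow> int"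
    and Y :: "nat \<Rightarrow> 'a \<Rightarrow> int"
    and xi :: "nat \<Rightarrow> int \<Rightarrow> 'a \<Rightarrow> nat"
  assumes eps_pm: "\<And>y \<omega>. \<omega> \<in> space M \<Longrightarrow> eps y \<omega> \<in> {-1, 1}"
    and Y0: "\<And>\<omega>. \<omega> \<in> space M \<Longrightarrow> Y 0 \<omega> = 0"
    and Y_steps_pm: "\<And>k \<omega>. \<omega> \<in> space M \<Longrightarrow> Y (Suc k) \<omega> - Y k \<omega> \<in> {-1, 1}"
    and xi_rv: "\<And>i y. xi i y \<in> measurable M (count_space UNIV)"
    and xi_indep: "indep_vars (\<lambda>_. count_space UNIV) (\<lambda>(i, y) \<omega>. xi i y \<omega>) ({1..} \<times> UNIV)"
    and xi_law: "\<And>i y k. i \<ge> 1 \<Longrightarrow> prob {\<omega> \<in> space M. xi i y \<omega> = k} = 2/3 * (1/3) ^ k"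
    and indep_three: "indep_sets
         (\<lambda>j::nat. if j = 0 then sets (vimage_algebra (space M) (\<lambda>\<omega> y. eps y \<omega>)
                                       (PiM UNIV (\<lambda>_. count_space UNIV)))
                else if j = 1 then sets (vimage_algebra (space M) (\<lambda>\<omega> k. Y k \<omega>)
                                       (PiM UNIV (\<lambda>_. count_space UNIV)))
                else sets (vimage_algebra (space M) (\<lambda>\<omega>. restrict (\<lambda>i y. xi i y \<omega>) {1..})
                                       (PiM {1..} (\<lambda>_. PiM UNIV (\<lambda>_. count_space UNIV)))))
         {0, 1, 2}"
begin

definition eps_algebra :: "'a measure" where
  "eps_algebra = vimage_algebra (space M) (\<lambda>\<omega> y. eps y \<omega>) (PiM UNIV (\<lambda>_. count_space UNIV))"

definition Y_algebra :: "'a measure" where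
  "Y_algebra = vimage_algebra (space M) (\<lambda>\<omega> k. Y k \<omega>) (PiM UNIV (\<lambda>_. count_space UNIV))"

definition eps_Y_algebra :: "'a measure" where
  "eps_Y_algebra = sigma (space M) (sets eps_algebra \<union> sets Y_algebra)"

definition xi_algebra :: "'a measure" where
  "xi_algebra = vimage_algebra (space M) (\<lambda>\<omega>. restrict (\<lambda>i y. xi i y \<omega>) {1..})
                         (PiM {1..} (\<lambda>_. PiM UNIV (\<lambda>_. count_space UNIV)))"

lemma eps_Y_generators_subset: "sets eps_algebra \<union> sets Y_algebra \<subseteq> Pow (space M)"
  using sets.sets_into_space[of _ eps_algebra] sets.sets_into_space[of _ Y_algebra]
  by (auto simp: eps_algebra_def Y_algebra_def)

lemma space_eps_Y_algebra [simp]: "space eps_Y_algebra = space M"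
  using eps_Y_generators_subset by (simp add: eps_Y_algebra_def)

lemma sets_eps_Y_algebra:
  "sets eps_Y_algebra = sigma_sets (space M) (sets eps_algebra \<union> sets Y_algebra)"
  using eps_Y_generators_subset by (simp add: eps_Y_algebra_def)

lemma space_xi_algebra [simp]: "space xi_algebra = space M"
  by (simp add: xi_algebra_def)

lemma indep_eps_Y_xi: "indep_set (sets eps_Y_algebra) (sets xi_algebra)"
proof -
  define F where "F j = (if j = 0 then sets eps_algebra else if j = 1 then sets Y_algebra
                         else sets xi_algebra)" for j :: nat
  define I where "I b = (if b then {0, 1} else {2 :: nat})" for b
  have "indep_sets (\<lambda>b. sigma_sets (space M) (\<Union>j\<in>I b. F j)) UNIV"
  proof (rule indep_sets_collect_sigma)
    show "indep_sets F (\<Union>b\<in>UNIV. I b)"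
      using indep_three unfolding F_def I_def eps_algebra_def Y_algebra_def xi_algebra_def
      by (simp add: UNIV_bool insert_commute)
    show "Int_stable (F j)" for j
      unfolding F_def by (auto simp: Int_stable_def)
    show "disjoint_family_on I UNIV"
      unfolding disjoint_family_on_def I_def by auto
  qed
  moreover have "sigma_sets (space M) (\<Union>j\<in>I True. F j) = sets eps_Y_algebra"
    by (simp add: F_def I_def sets_eps_Y_algebra Un_commute)
  moreover have "sigma_sets (space M) (\<Union>j\<in>I False. F j) = sets xi_algebra"
    using sets.sigma_sets_eq[of xi_algebra] by (simp add: F_def I_def)
  ultimately show ?thesis
    unfolding indep_set_def
    by (subst indep_sets_cong[where G = "\<lambda>b. sigma_sets (space M) (\<Union>j\<in>I b. F j)" and J = UNIV])
       (auto split: bool.split)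
qed

lemma eps_measurable_eps_Y: "eps y \<in> measurable eps_Y_algebra (count_space UNIV)"
proof -
  have "eps y \<in> measurable eps_algebra (count_space UNIV)"
    unfolding eps_algebra_def
    using measurable_vimage_algebra_PiM_component[of "\<lambda>\<omega> y. eps y \<omega>" "space M" UNIV] by (simp add: space_PiM)
  then show ?thesis
    using measurable_mono[of "count_space UNIV" "count_space UNIV" eps_algebra eps_Y_algebra]
    by (auto simp: sets_eps_Y_algebra eps_algebra_def)
qed

lemma Y_measurable_eps_Y: "Y k \<in> measurable eps_Y_algebra (count_space UNIV)"
proof -
  have "Y k \<in> measurable Y_algebra (count_space UNIV)"
    unfolding Y_algebra_def
    using measurable_vimage_algebra_PiM_component[of "\<lambda>\<omega> k. Y k \<omega>" "space M" UNIV] by (simp add: space_PiM)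
  then show ?thesis
    using measurable_mono[of "count_space UNIV" "count_space UNIV" Y_algebra eps_Y_algebra]
    by (auto simp: sets_eps_Y_algebra Y_algebra_def)
qed

lemma xi_measurable_xi_algebra:
  assumes "i \<ge> 1"
  shows "xi i y \<in> measurable xi_algebra (count_space UNIV)"
proof -
  have "(\<lambda>\<omega>. restrict (\<lambda>i y. xi i y \<omega>) {1..} i)
      \<in> measurable xi_algebra (PiM UNIV (\<lambda>_. count_space UNIV))"
    unfolding xi_algebra_def using assms
    by (intro measurable_vimage_algebra_PiM_component) (auto simp: space_PiM)
  then have "(\<lambda>\<omega> y. xi i y \<omega>) \<in> measurable xi_algebra (PiM UNIV (\<lambda>_. count_space UNIV))"
    using assms by simp
  then show ?thesis
    by (rule measurable_compose[OF _ measurable_component_singleton]) simp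
qed

lemma measurable_eps_Y_subset: "measurable eps_Y_algebra N \<subseteq> measurable M N"
proof -
  have "sets eps_Y_algebra \<subseteq> events"
    using indep_eps_Y_xi by (simp add: indep_sets2_eq)
  then show ?thesis
    by (intro measurable_mono) auto
qed

definition weight :: "nat \<Rightarrow> int \<times> nat \<Rightarrow> 'a \<Rightarrow> real" where
  "weight n = (\<lambda>(y, i) \<omega>. real_of_int (eps y \<omega>) * of_bool (i \<le> loc_time_before Y n y \<omega>))"

definition noise :: "int \<times> nat \<Rightarrow> 'a \<Rightarrow> real" where
  "noise = (\<lambda>(y, i) \<omega>. real (xi i y \<omega>) - 1/2)"

definition index_box :: "nat \<Rightarrow> (int \<times> nat) set" where
  "index_box n = {-int n..int n} \<times> {1..n}"

lemma weight_measurable_eps_Y: "weight n p \<in> borel_measurable eps_Y_algebra"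
  using eps_measurable_eps_Y Y_measurable_eps_Y
  unfolding weight_def loc_time_before_eq_sum by (cases p) (simp, measurable)

lemma weight_measurable: "weight n p \<in> borel_measurable M"
  using weight_measurable_eps_Y measurable_eps_Y_subset by blast

lemma abs_weight_le_1: "\<omega> \<in> space M \<Longrightarrow> \<bar>weight n p \<omega>\<bar> \<le> 1"
  using eps_pm[of \<omega> "fst p"] by (cases p) (auto simp: weight_def)

lemma integrable_weight_mult: "integrable M (\<lambda>\<omega>. weight n p \<omega> * weight n q \<omega>)"
proof (rule integrable_const_bound[where B = 1])
  show "AE \<omega> in M. norm (weight n p \<omega> * weight n q \<omega>) \<le> 1"
    using abs_weight_le_1 by (intro AE_I2) (simp add: abs_mult mult_le_one)
qed (use weight_measurable in measurable)

lemma abs_Y_le: "\<omega> \<in> space M \<Longrightarrow> \<bar>Y k \<omega>\<bar> \<le> int k"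
proof (induction k)
  case (Suc k)
  then show ?case using Y_steps_pm[OF Suc.prems, of k] by auto
qed (simp add: Y0)

lemma Y_range_subset:
  assumes "\<omega> \<in> space M"
  shows "(\<lambda>k. Y k \<omega>) ` {..<n} \<subseteq> {-int n..int n}"
proof
  fix z assume "z \<in> (\<lambda>k. Y k \<omega>) ` {..<n}"
  then obtain k where "k < n" "z = Y k \<omega>" by auto
  then show "z \<in> {-int n..int n}" using abs_Y_le[OF assms, of k] by auto
qed

lemma sum_index_box_weight_square:
  assumes "\<omega> \<in> space M"
  shows "(\<Sum>p\<in>index_box n. (weight n p \<omega>)\<^sup>2) = real n"
proof -
  have eps_square: "(real_of_int (eps y \<omega>))\<^sup>2 = 1" for y
    using eps_pm[OF assms, of y] by auto
  have "(\<Sum>p\<in>index_box n. (weight n p \<omega>)\<^sup>2)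
      = (\<Sum>y\<in>{-int n..int n}. \<Sum>i\<in>{1..n}. of_bool (i \<le> loc_time_before Y n y \<omega>))"
    unfolding index_box_def sum.cartesian_product
    by (intro sum.cong refl) (auto simp: weight_def power_mult_distrib eps_square)
  also have "\<dots> = (\<Sum>y\<in>{-int n..int n}. real (loc_time_before Y n y \<omega>))"
  proof (intro sum.cong refl)
    fix y
    have "{1..n} \<inter> {i. i \<le> loc_time_before Y n y \<omega>} = {1..loc_time_before Y n y \<omega>}"
      using loc_time_before_le[of Y n y \<omega>] by auto
    then show "(\<Sum>i\<in>{1..n}. of_bool (i \<le> loc_time_before Y n y \<omega>)) = real (loc_time_before Y n y \<omega>)"
      by simp
  qed
  also have "\<dots> = real n"
    using sum_loc_time_before[where Y = Y and \<omega> = \<omega>, OF _ Y_range_subset[OF assms]]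
    by (simp flip: of_nat_sum)
  finally show ?thesis .
qed

lemma X1_eq_sum_weight_noise:
  assumes "\<omega> \<in> space M"
  shows "X1 eps Y xi (1/2) n \<omega> = (\<Sum>p\<in>index_box n. weight n p \<omega> * noise p \<omega>)"
  using X1_eq_sum_box[where Y = Y and \<omega> = \<omega> and eps = eps and xi = xi and m = "1/2",
      OF _ Y_range_subset[OF assms]]
  unfolding index_box_def weight_def noise_def by (simp add: case_prod_beta)

lemma noise_moments:
  assumes "snd p \<ge> 1"
  shows "integrable M (noise p)" "expectation (noise p) = 0"
    and "integrable M (\<lambda>\<omega>. (noise p \<omega>)\<^sup>2)" "expectation (\<lambda>\<omega>. (noise p \<omega>)\<^sup>2) = xi_variance"
proof -
  obtain y i where p: "p = (y, i)" and i: "i \<ge> 1" using assms by (cases p) auto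
  have law: "prob {\<omega> \<in> space M. xi i y \<omega> = k} = (1 - 2/3) ^ k * (2/3)" for k
    using xi_law[OF i, of y k] by simp
  note moments = geometric_centered_moments[of "2/3", OF _ xi_rv law]
  show "integrable M (noise p)" "expectation (noise p) = 0"
    "integrable M (\<lambda>\<omega>. (noise p \<omega>)\<^sup>2)" "expectation (\<lambda>\<omega>. (noise p \<omega>)\<^sup>2) = xi_variance"
    using moments by (simp_all add: p noise_def xi_variance_def)
qed

lemma noise_measurable_xi_algebra:
  assumes "snd p \<ge> 1"
  shows "noise p \<in> borel_measurable xi_algebra"
  using xi_measurable_xi_algebra[OF assms, of "fst p"] by (cases p) (simp add: noise_def)

lemma noise_orthogonal:
  assumes "p \<noteq> q" "snd p \<ge> 1" "snd q \<ge> 1"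
  shows "integrable M (\<lambda>\<omega>. noise p \<omega> * noise q \<omega>)"
    and "expectation (\<lambda>\<omega>. noise p \<omega> * noise q \<omega>) = 0"
proof -
  obtain y i z j where p: "p = (y, i)" and q: "q = (z, j)" by (cases p, cases q)
  have "indep_var (count_space UNIV) (xi i y) (count_space UNIV) (xi j z)"
    using indep_vars_imp_indep_var[OF xi_indep, of "(i, y)" "(j, z)"] assms by (auto simp: p q)
  then have indep: "indep_var borel (noise p) borel (noise q)"
    using indep_var_compose[of _ _ _ _ "\<lambda>k. real k - 1/2" borel "\<lambda>k. real k - 1/2" borel]
    by (simp add: p q noise_def comp_def)
  show "integrable M (\<lambda>\<omega>. noise p \<omega> * noise q \<omega>)"
    using indep_var_integrable[OF indep] noise_moments assms by simp
  show "expectation (\<lambda>\<omega>. noise p \<omega> * noise q \<omega>) = 0"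
    using indep_var_lebesgue_integral[OF indep] noise_moments assms by simp
qed

lemma integrable_noise_mult:
  assumes "snd p \<ge> 1" "snd q \<ge> 1"
  shows "integrable M (\<lambda>\<omega>. noise p \<omega> * noise q \<omega>)"
  using noise_orthogonal(1)[OF _ assms] noise_moments(3)[OF assms(1)]
  by (cases "p = q") (simp_all add: power2_eq_square)

lemma noise_measurable: "noise p \<in> borel_measurable M"
  using xi_rv by (cases p) (simp add: noise_def)

lemma X1_measurable: "X1 eps Y xi (1/2) n \<in> borel_measurable M"
proof -
  have "(\<lambda>\<omega>. \<Sum>p\<in>index_box n. weight n p \<omega> * noise p \<omega>) \<in> borel_measurable M"
    using weight_measurable noise_measurable by (intro borel_measurable_sum borel_measurable_times)
  then show ?thesis
    by (rule measurable_cong[THEN iffD1, rotated]) (simp add: X1_eq_sum_weight_noise)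
qed

theorem second_moment_X1:
  shows "integrable M (\<lambda>\<omega>. (X1 eps Y xi (1/2) n \<omega>)\<^sup>2)"
    and "expectation (\<lambda>\<omega>. (X1 eps Y xi (1/2) n \<omega>)\<^sup>2) = xi_variance * real n"
proof -
  have in_box: "snd p \<ge> 1" if "p \<in> index_box n" for p
    using that by (auto simp: index_box_def)
  have box_noise_measurable: "noise p \<in> borel_measurable xi_algebra" if "p \<in> index_box n" for p
    using noise_measurable_xi_algebra in_box that by blast
  have box_noise_mult: "integrable M (\<lambda>\<omega>. noise p \<omega> * noise q \<omega>)"
    if "p \<in> index_box n" "q \<in> index_box n" for p q
    using integrable_noise_mult in_box that by blast
  have box_noise_orthogonal: "expectation (\<lambda>\<omega>. noise p \<omega> * noise q \<omega>) = 0"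
    if "p \<in> index_box n" "q \<in> index_box n" "p \<noteq> q" for p q
    using noise_orthogonal(2) in_box that by blast
  have "finite (index_box n)" by (simp add: index_box_def)
  note second_moment = second_moment_sum_indep_weights[where A = "weight n" and D = noise,
      OF this indep_eps_Y_xi space_eps_Y_algebra space_xi_algebra
      weight_measurable_eps_Y box_noise_measurable integrable_weight_mult box_noise_mult
      box_noise_orthogonal]
  have moment: "integrable M (\<lambda>\<omega>. (\<Sum>p\<in>index_box n. weight n p \<omega> * noise p \<omega>)\<^sup>2)"
    "expectation (\<lambda>\<omega>. (\<Sum>p\<in>index_box n. weight n p \<omega> * noise p \<omega>)\<^sup>2)
       = (\<Sum>p\<in>index_box n. expectation (\<lambda>\<omega>. (weight n p \<omega>)\<^sup>2) * expectation (\<lambda>\<omega>. (noise p \<omega>)\<^sup>2))"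
    using second_moment by simp_all
  have "expectation (\<lambda>\<omega>. (X1 eps Y xi (1/2) n \<omega>)\<^sup>2)
      = expectation (\<lambda>\<omega>. (\<Sum>p\<in>index_box n. weight n p \<omega> * noise p \<omega>)\<^sup>2)"
    by (intro Bochner_Integration.integral_cong) (simp_all add: X1_eq_sum_weight_noise)
  also have "\<dots> = (\<Sum>p\<in>index_box n. expectation (\<lambda>\<omega>. (weight n p \<omega>)\<^sup>2) * xi_variance)"
    using moment(2) noise_moments(4) in_box by simp
  also have "\<dots> = expectation (\<lambda>\<omega>. \<Sum>p\<in>index_box n. (weight n p \<omega>)\<^sup>2) * xi_variance"
    using integrable_weight_mult
    by (simp add: Bochner_Integration.integral_sum sum_distrib_right power2_eq_square)
  also have "expectation (\<lambda>\<omega>. \<Sum>p\<in>index_box n. (weight n p \<omega>)\<^sup>2) = expectation (\<lambda>_. real n)"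
    using sum_index_box_weight_square by (intro Bochner_Integration.integral_cong) auto
  finally show "expectation (\<lambda>\<omega>. (X1 eps Y xi (1/2) n \<omega>)\<^sup>2) = xi_variance * real n"
    by (simp add: prob_space)
  show "integrable M (\<lambda>\<omega>. (X1 eps Y xi (1/2) n \<omega>)\<^sup>2)"
    using moment(1)
    by (rule Bochner_Integration.integrable_cong[OF refl, THEN iffD1, rotated])
       (simp add: X1_eq_sum_weight_noise)
qed

theorem tendsto_prob_X1:
  assumes "e > 0"
  shows "(\<lambda>n. prob {\<omega> \<in> space M. \<bar>real n powr (-3/4) * X1 eps Y xi (1/2) n \<omega>\<bar> > e}) \<longlonglongrightarrow> 0"
  using second_moment_linear_imp_tendsto_prob[where S = "X1 eps Y xi (1/2)" and a = "3/4",
      OF X1_measurable second_moment_X1(1) eq_refl[OF second_moment_X1(2)] _ assms]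
  by simp

end

theorem lemma8:
  fixes M :: "'a measure"
    and eps :: "int \<Rightarrow> 'a \<Rightarrow> int"
    and Y :: "nat \<Rightarrow> 'a \<Rightarrow> int"
    and xi :: "nat \<Rightarrow> int \<Rightarrow> 'a \<Rightarrow> nat"
  assumes P: "prob_space M"
    and eps_rv: "\<And>y. eps y \<in> measurable M (count_space UNIV)"
    and eps_pm: "\<And>y \<omega>. \<omega> \<in> space M \<Longrightarrow> eps y \<omega> \<in> {-1, 1}"
    and eps_half: "measure M {\<omega> \<in> space M. eps 0 \<omega> = 1} = 1/2"
    and eps_stat: "stationary_seq M eps"
    and eps_assoc: "associated_seq M eps"
    and eps_cov: "\<exists>\<alpha> C. \<alpha> > 1 \<and> (\<forall>y::int. y \<noteq> 0 \<longrightarrow>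
         \<bar>\<integral>\<omega>. real_of_int (eps 0 \<omega> * eps y \<omega>) \<partial>M\<bar> \<le> C * \<bar>real_of_int y\<bar> powr (-\<alpha>))"
    and Y_rv: "\<And>k. Y k \<in> measurable M (count_space UNIV)"
    and Y0: "\<And>\<omega>. \<omega> \<in> space M \<Longrightarrow> Y 0 \<omega> = 0"
    and Y_steps_pm: "\<And>k \<omega>. \<omega> \<in> space M \<Longrightarrow> Y (Suc k) \<omega> - Y k \<omega> \<in> {-1, 1}"
    and Y_steps_half: "\<And>k. measure M {\<omega> \<in> space M. Y (Suc k) \<omega> - Y k \<omega> = 1} = 1/2"
    and Y_steps_indep: "prob_space.indep_vars M (\<lambda>_. count_space UNIV)
                          (\<lambda>k \<omega>. Y (Suc k) \<omega> - Y k \<omega>) UNIV"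
    and xi_rv: "\<And>i y. xi i y \<in> measurable M (count_space UNIV)"
    and xi_indep: "prob_space.indep_vars M (\<lambda>_. count_space UNIV)
                     (\<lambda>(i, y) \<omega>. xi i y \<omega>) ({1..} \<times> UNIV)"
    and xi_law: "\<And>i y k. i \<ge> 1 \<Longrightarrow>
                   measure M {\<omega> \<in> space M. xi i y \<omega> = k} = 2/3 * (1/3) ^ k"
    and indep_three: "prob_space.indep_sets M
         (\<lambda>j::nat. if j = 0 then sets (vimage_algebra (space M) (\<lambda>\<omega> y. eps y \<omega>)
                                       (PiM UNIV (\<lambda>_. count_space UNIV)))
                else if j = 1 then sets (vimage_algebra (space M) (\<lambda>\<omega> k. Y k \<omega>)
                                       (PiM UNIV (\<lambda>_. count_space UNIV)))
                else sets (vimage_algebra (space M) (\<lambda>\<omega>. restrict (\<lambda>i y. xi i y \<omega>) {1..})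
                                       (PiM {1..} (\<lambda>_. PiM UNIV (\<lambda>_. count_space UNIV)))))
         {0, 1, 2}"
  shows "\<forall>e>0. (\<lambda>n. measure M {\<omega> \<in> space M.
            \<bar>real n powr (-3/4) * X1 eps Y xi (1/2) n \<omega>\<bar> > e}) \<longlonglongrightarrow> 0"
proof -
  interpret X1_model M eps Y xi
    using P eps_pm Y0 Y_steps_pm xi_rv xi_indep xi_law indep_three
    by (simp add: X1_model_def X1_model_axioms_def)
  show ?thesis
    using tendsto_prob_X1 by blast
qed

end
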